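(* Let $\Omega\subset\mathbb R^d$ be a bounded Borel set, with Lebesgue boundary $\partial^*\Omega$. Then: 1. $\mathbb 1_\Omega\in B^0_{\infty,\infty}(\mathbb R^d)$. 2. Let $s\in\mathbb R$ and $p\in(0,\infty)$. If $\sup_{j\in\mathbb N}2^{(sp-d)j}N_j(\partial^*\Omega)<\infty$, then $\mathbb 1_\Omega\in B^s_{p,\infty}(\mathbb R^d)$. 3. Let $s\in\mathbb R$ and $p,q\in(0,\infty)$. If $\sum_{j=0}^\infty\big(2^{(sp-d)j}N_j(\partial^*\Omega)\big)^{q/p}<\infty$, then $\mathbb 1_\Omega\in B^s_{p,q}(\mathbb R^d)$.
   Context: $\lambda$ denotes Lebesgue measure. The Lebesgue boundary $\partial^*\Omega$ of a Borel set $\Omega$ is the set of $x\in\mathbb R^d$ such that for every $r>0$, $\lambda(B(x,r)\cap\Omega)>0$ and $\lambda(B(x,r)\cap\Omega^c)>0$. For $A\subset\mathbb R^d$ and $j\in\mathbb N$, $N_j(A)$ is the number of $k\in\mathbb Z^d$ such that $A\cap\prod_{i=1}^d[k_i2^{-j},(k_i+1)2^{-j}]\neq\varnothing$. Besov spaces via wavelets: fix $r$ large and compactly supported Daubechies wavelets $\phi,\psi^{(1)},\dots,\psi^{(2^d-1)}$ of class $C^r$, with support exactly $[0,N]^d$, $\int\phi=1$, $\psi^{(i)}$ with vanishing moments up to order $r-1$, such that $\{\phi(\cdot-k),2^{dj/2}\psi^{(i)}(2^j\cdot-k)\}_{j\in\mathbb N,i,k\in\mathbb Z^d}$ is an orthonormal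 basis of $L^2(\mathbb R^d)$. For a distribution $T$ of order $\le r$: $c_k=\langle T,\phi(\cdot-k)\rangle$, $c^{(i)}_{j,k}=2^{dj}\langle T,\psi^{(i)}(2^j\cdot-k)\rangle$. For $s\in\mathbb R$, $p,q\in(0,\infty]$, $T\in B^s_{p,q}(\mathbb R^d)$ iff $\sum_k|c_k|^p<\infty$ and $\sum_{j\ge0}\big(\sum_{k\in\mathbb Z^d}\sum_{i=1}^{2^d-1}|2^{(s-d/p)j}c^{(i)}_{j,k}|^p\big)^{q/p}<\infty$, with the usual modifications (suprema) if $p$ or $q$ is infinite. *)

theory Defs
  imports "HOL-Analysis.Analysis"
begin

(* Dimension d = DIM('a); R^d is an abstract euclidean space 'a. *)

definition int_lattice :: "'a::euclidean_space set" where
  "int_lattice = {k. \<forall>b\<in>Basis. k \<bullet> b \<in> \<int>}"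

definition lebesgue_boundary :: "'a::euclidean_space set \<Rightarrow> 'a set" where
  "lebesgue_boundary \<Omega> = {x. \<forall>r>0. emeasure lebesgue (ball x r \<inter> \<Omega>) > 0
                                     \<and> emeasure lebesgue (ball x r - \<Omega>) > 0}"

definition dyadic_cube :: "nat \<Rightarrow> 'a::euclidean_space \<Rightarrow> 'a set" where
  "dyadic_cube j k = cbox ((2 powr - real j) *\<^sub>R k) ((2 powr - real j) *\<^sub>R (k + One))"

definition Ncount :: "nat \<Rightarrow> 'a::euclidean_space set \<Rightarrow> nat" where
  "Ncount j A = card {k \<in> int_lattice. A \<inter> dyadic_cube j k \<noteq> {}}"

fun C_k :: "nat \<Rightarrow> ('a::euclidean_space \<Rightarrow> real) \<Rightarrow> bool" where
  "C_k 0 f = continuous_on UNIV f"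
| "C_k (Suc n) f = ((\<forall>x. f differentiable (at x)) \<and> continuous_on UNIV f \<and>
       (\<forall>b\<in>Basis. C_k n (\<lambda>x. frechet_derivative f (at x) b)))"

(* indices of the wavelet basis: Inl k (scaling functions), Inr (j,i,k) (wavelets) *)
definition wavelet_index :: "('a::euclidean_space + (nat \<times> nat \<times> 'a)) set" where
  "wavelet_index = Inl ` int_lattice \<union>
     Inr ` (UNIV \<times> {1..2^DIM('a) - 1} \<times> int_lattice)"

definition wavelet_fun ::
  "('a::euclidean_space \<Rightarrow> real) \<Rightarrow> (nat \<Rightarrow> 'a \<Rightarrow> real) \<Rightarrow>
   ('a + (nat \<times> nat \<times> 'a)) \<Rightarrow> 'a \<Rightarrow> real" where
  "wavelet_fun \<phi> \<psi> a = (case a of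
      Inl k \<Rightarrow> (\<lambda>x. \<phi> (x - k))
    | Inr (j, i, k) \<Rightarrow> (\<lambda>x. 2 powr (real DIM('a) * real j / 2) * \<psi> i ((2 ^ j) *\<^sub>R x - k)))"

(* Admissible compactly supported (Daubechies-type) wavelet system of class C^r,
   supports exactly [0,N]^d, integral of phi = 1, vanishing moments up to order r-1,
   and the family is an orthonormal basis of L^2(R^d) (orthonormality + Parseval). *)
definition wavelet_system ::
  "nat \<Rightarrow> nat \<Rightarrow> ('a::euclidean_space \<Rightarrow> real) \<Rightarrow> (nat \<Rightarrow> 'a \<Rightarrow> real) \<Rightarrow> bool" where
  "wavelet_system r N \<phi> \<psi> \<longleftrightarrow>
     C_k r \<phi> \<and> (\<forall>i\<in>{1..2^DIM('a) - 1}. C_k r (\<psi> i)) \<and>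
     closure {x. \<phi> x \<noteq> 0} = cbox 0 (real N *\<^sub>R One) \<and>
     (\<forall>i\<in>{1..2^DIM('a) - 1}. closure {x. \<psi> i x \<noteq> 0} = cbox 0 (real N *\<^sub>R One)) \<and>
     integrable lborel \<phi> \<and> (LINT x|lborel. \<phi> x) = 1 \<and>
     (\<forall>i\<in>{1..2^DIM('a) - 1}. \<forall>\<alpha>::'a \<Rightarrow> nat. (\<Sum>b\<in>Basis. \<alpha> b) \<le> r - 1 \<longrightarrow>
        integrable lborel (\<lambda>x. (\<Prod>b\<in>Basis. (x \<bullet> b) ^ \<alpha> b) * \<psi> i x) \<and>
        (LINT x|lborel. (\<Prod>b\<in>Basis. (x \<bullet> b) ^ \<alpha> b) * \<psi> i x) = 0) \<and>
     (\<forall>a\<in>wavelet_index. wavelet_fun \<phi> \<psi> a \<in> borel_measurable lborel) \<and>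
     (\<forall>a\<in>wavelet_index. \<forall>b\<in>wavelet_index.
        integrable lborel (\<lambda>x. wavelet_fun \<phi> \<psi> a x * wavelet_fun \<phi> \<psi> b x) \<and>
        (LINT x|lborel. wavelet_fun \<phi> \<psi> a x * wavelet_fun \<phi> \<psi> b x) = (if a = b then 1 else 0)) \<and>
     (\<forall>f. f \<in> borel_measurable lborel \<and> integrable lborel (\<lambda>x. (f x)\<^sup>2) \<longrightarrow>
        ((\<lambda>a. (LINT x|lborel. f x * wavelet_fun \<phi> \<psi> a x)\<^sup>2) has_sum (LINT x|lborel. (f x)\<^sup>2))
          wavelet_index)"

definition coef_phi :: "('a::euclidean_space \<Rightarrow> real) \<Rightarrow> ('a \<Rightarrow> real) \<Rightarrow> 'a \<Rightarrow> real" where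
  "coef_phi \<phi> T k = (LINT x|lborel. T x * \<phi> (x - k))"

definition coef_psi :: "(nat \<Rightarrow> 'a::euclidean_space \<Rightarrow> real) \<Rightarrow> ('a \<Rightarrow> real) \<Rightarrow>
    nat \<Rightarrow> nat \<Rightarrow> 'a \<Rightarrow> real" where
  "coef_psi \<psi> T j i k = 2 ^ (DIM('a) * j) * (LINT x|lborel. T x * \<psi> i ((2 ^ j) *\<^sub>R x - k))"

(* Besov membership T \<in> B^s_{p,q}; p, q \<in> (0, \<infinity>], \<infinity> = top of ennreal *)
definition besov :: "('a::euclidean_space \<Rightarrow> real) \<Rightarrow> (nat \<Rightarrow> 'a \<Rightarrow> real) \<Rightarrow>
    real \<Rightarrow> ennreal \<Rightarrow> ennreal \<Rightarrow> ('a \<Rightarrow> real) \<Rightarrow> bool" where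
  "besov \<phi> \<psi> s p q T \<longleftrightarrow>
     (let d = real DIM('a); I = {1..2^DIM('a) - 1} \<times> int_lattice in
      if p = \<infinity> then
        bdd_above ((\<lambda>k. \<bar>coef_phi \<phi> T k\<bar>) ` int_lattice) \<and>
        (\<forall>j. bdd_above ((\<lambda>(i,k). \<bar>2 powr (s * real j) * coef_psi \<psi> T j i k\<bar>) ` I)) \<and>
        (let M = (\<lambda>j. SUP (i,k)\<in>I. \<bar>2 powr (s * real j) * coef_psi \<psi> T j i k\<bar>) in
          if q = \<infinity> then bdd_above (range M)
          else summable (\<lambda>j. M j powr enn2real q))
      else
        (let p' = enn2real p in
        (\<lambda>k. \<bar>coef_phi \<phi> T k\<bar> powr p') summable_on int_lattice \<and>
        (\<forall>j. (\<lambda>(i,k). \<bar>2 powr ((s - d / p') * real j) * coef_psi \<psi> T j i k\<bar> powr p') summable_on I) \<and>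
        (let S = (\<lambda>j. \<Sum>\<^sub>\<infinity>(i,k)\<in>I. \<bar>2 powr ((s - d / p') * real j) * coef_psi \<psi> T j i k\<bar> powr p') in
          if q = \<infinity> then bdd_above (range S)
          else summable (\<lambda>j. S j powr (enn2real q / p')))))"

end

theory Submission
  imports Defs
begin

text \<open>
  Dilation by \<open>2^j\<close> scales integrals by \<open>2^(-dj)\<close>, so every wavelet coefficient of the
  indicator of \<open>\<Omega>\<close> is bounded by the \<open>L^1\<close> norm of the wavelet; this already gives
  \<open>B^0_{\<infinity>,\<infinity>}\<close>. On a compact connected set disjoint from the Lebesgue boundary, \<open>\<Omega>\<close> is
  either null or conull. As the wavelets have mean zero, the coefficient \<open>c^(i)_{j,k}\<close> therefore
  vanishes unless the cube \<open>2^(-j)(k + [0,N]^d)\<close> supporting \<open>\<psi>\<^sub>i(2^j x - k)\<close> meets \<open>\<partial>\<^sup>*\<Omega>\<close>.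
  Every such \<open>k\<close> is \<open>a - m\<close> with \<open>a\<close> indexing a dyadic cube of level \<open>j\<close> meeting \<open>\<partial>\<^sup>*\<Omega>\<close> and
  \<open>m \<in> {0..N}^d\<close>, so the level-\<open>j\<close> sum in the \<open>B^s_{p,q}\<close> quasi-norm is at most a constant
  times \<open>2^((sp-d)j) N_j(\<partial>\<^sup>*\<Omega>)\<close>. Only finitely many scaling coefficients are non-zero because
  \<open>\<Omega>\<close> is bounded.
\<close>

lemma lborel_eq_density_dilate_translate:
  fixes k :: "'a::euclidean_space"
  assumes "c \<noteq> 0"
  shows "lborel = density (distr lborel borel (\<lambda>x. c *\<^sub>R x - k)) (\<lambda>_. \<bar>c\<bar> ^ DIM('a))"
  using lborel_affine[OF assms, of "- k"] by simp

lemma lborel_integrable_dilate_translate_iff: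
  fixes g :: "'a::euclidean_space \<Rightarrow> real"
  assumes [measurable]: "g \<in> borel_measurable lborel" and c: "c \<noteq> 0"
  shows "integrable lborel (\<lambda>x. g (c *\<^sub>R x - k)) \<longleftrightarrow> integrable lborel g"
proof -
  have "integrable lborel g \<longleftrightarrow> integrable lborel (\<lambda>x. \<bar>c\<bar> ^ DIM('a) *\<^sub>R g (c *\<^sub>R x - k))"
    by (subst lborel_eq_density_dilate_translate[OF c, of k])
       (simp add: integrable_density integrable_distr_eq)
  then show ?thesis
    using c by simp
qed

lemma lborel_integral_dilate_translate:
  fixes g :: "'a::euclidean_space \<Rightarrow> real"
  assumes [measurable]: "g \<in> borel_measurable lborel" and c: "c \<noteq> 0"
  shows "(LINT x|lborel. g (c *\<^sub>R x - k)) = (LINT x|lborel. g x) / \<bar>c\<bar> ^ DIM('a)"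
proof -
  have "(LINT x|lborel. g x) = \<bar>c\<bar> ^ DIM('a) * (LINT x|lborel. g (c *\<^sub>R x - k))"
    by (subst lborel_eq_density_dilate_translate[OF c, of k])
       (simp add: integral_density integral_distr)
  then show ?thesis
    using c by simp
qed

lemma lebesgue_boundary_subset_closure: "lebesgue_boundary \<Omega> \<subseteq> closure \<Omega>"
proof
  fix x assume x: "x \<in> lebesgue_boundary \<Omega>"
  show "x \<in> closure \<Omega>"
    unfolding closure_approachable
  proof (intro allI impI)
    fix e :: real assume "e > 0"
    then have "0 < emeasure lebesgue (ball x e \<inter> \<Omega>)"
      using x unfolding lebesgue_boundary_def by blast
    then have "ball x e \<inter> \<Omega> \<noteq> {}"
      by auto
    then show "\<exists>y\<in>\<Omega>. dist y x < e"
      by (auto simp: dist_commute)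
  qed
qed

lemma bounded_lebesgue_boundary: "bounded \<Omega> \<Longrightarrow> bounded (lebesgue_boundary \<Omega>)"
  using bounded_closure bounded_subset lebesgue_boundary_subset_closure by blast

lemma compact_Int_null_if_locally_null:
  fixes A S :: "'a::euclidean_space set"
  assumes A: "A \<in> sets borel" and S: "compact S"
    and local_null: "\<And>x. x \<in> S \<Longrightarrow> \<exists>U. open U \<and> x \<in> U \<and> U \<inter> A \<in> null_sets lborel"
  shows "S \<inter> A \<in> null_sets lborel"
proof -
  let ?\<U> = "{U. open U \<and> U \<inter> A \<in> null_sets lborel}"
  have "S \<subseteq> \<Union>?\<U>"
    using local_null by blast
  then obtain \<F> where \<F>: "\<F> \<subseteq> ?\<U>" "finite \<F>" "S \<subseteq> \<Union>\<F>"
    using compactE[OF S] by (metis (no_types, lifting) mem_Collect_eq)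
  have "(\<Union>U\<in>\<F>. U \<inter> A) \<in> null_sets lborel"
    using \<F>(1,2) by (intro null_sets_UN') (auto intro: countable_finite)
  moreover have "S \<inter> A \<subseteq> (\<Union>U\<in>\<F>. U \<inter> A)"
    using \<F>(3) by blast
  moreover have "S \<inter> A \<in> sets lborel"
    using A S by (simp add: compact_imp_closed borel_closed)
  ultimately show ?thesis
    by (blast intro: null_sets_subset)
qed

lemma locally_null_or_conull_if_not_in_lebesgue_boundary:
  fixes \<Omega> :: "'a::euclidean_space set"
  assumes \<Omega>: "\<Omega> \<in> sets borel" and "x \<notin> lebesgue_boundary \<Omega>"
  shows "\<exists>U. open U \<and> x \<in> U \<and> (U \<inter> \<Omega> \<in> null_sets lborel \<or> U \<inter> - \<Omega> \<in> null_sets lborel)"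
proof -
  obtain r where r: "r > 0"
    "\<not> (0 < emeasure lebesgue (ball x r \<inter> \<Omega>) \<and> 0 < emeasure lebesgue (ball x r - \<Omega>))"
    using assms(2) unfolding lebesgue_boundary_def by blast
  have "ball x r \<inter> \<Omega> \<in> null_sets lborel \<or> ball x r \<inter> - \<Omega> \<in> null_sets lborel"
    using \<Omega> r(2) by (simp add: null_sets_def Diff_eq)
  then show ?thesis
    using r(1) by (intro exI[of _ "ball x r"]) simp
qed

lemma null_or_conull_if_disjoint_lebesgue_boundary:
  fixes \<Omega> S :: "'a::euclidean_space set"
  assumes \<Omega>: "\<Omega> \<in> sets borel" and S: "compact S" "connected S"
    and disjoint: "S \<inter> lebesgue_boundary \<Omega> = {}"
  shows "S \<inter> \<Omega> \<in> null_sets lborel \<or> S - \<Omega> \<in> null_sets lborel"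
proof -
  define E where "E A = {x. \<exists>U. open U \<and> x \<in> U \<and> U \<inter> A \<in> null_sets lborel}" for A :: "'a set"
  have open_E: "open (E A)" for A
    unfolding open_subopen[of "E A"] unfolding E_def by blast
  have cover: "S \<subseteq> E \<Omega> \<union> E (- \<Omega>)"
  proof
    fix x assume "x \<in> S"
    then have "x \<notin> lebesgue_boundary \<Omega>"
      using disjoint by blast
    then show "x \<in> E \<Omega> \<union> E (- \<Omega>)"
      using locally_null_or_conull_if_not_in_lebesgue_boundary[OF \<Omega>] unfolding E_def by auto
  qed
  have "E \<Omega> \<inter> E (- \<Omega>) = {}"
  proof (rule ccontr)
    assume "E \<Omega> \<inter> E (- \<Omega>) \<noteq> {}"
    then obtain y U V where U: "open U" "U \<inter> \<Omega> \<in> null_sets lborel"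
      and V: "open V" "V \<inter> - \<Omega> \<in> null_sets lborel" and y: "y \<in> U \<inter> V"
      unfolding E_def by blast
    then obtain e where e: "e > 0" "ball y e \<subseteq> U \<inter> V"
      by (meson open_Int openE)
    have "ball y e \<subseteq> (U \<inter> \<Omega>) \<union> (V \<inter> - \<Omega>)"
      using e(2) by blast
    then have "ball y e \<in> null_sets lborel"
      using null_sets_subset[OF null_sets.Un[OF U(2) V(2)]] by simp
    then show False
      using e(1) unit_ball_vol_pos[of "DIM('a)"] by (simp add: null_sets_def emeasure_ball)
  qed
  then have "S \<subseteq> E \<Omega> \<or> S \<subseteq> E (- \<Omega>)"
    using connectedD[OF S(2) open_E open_E] cover by blast
  moreover have "S \<inter> A \<in> null_sets lborel" if "S \<subseteq> E A" "A \<in> sets borel" for A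
    using compact_Int_null_if_locally_null[OF that(2) S(1)] that(1) unfolding E_def by blast
  ultimately show ?thesis
    using \<Omega> by (metis Diff_eq borel_comp)
qed

definition support_cube :: "nat \<Rightarrow> nat \<Rightarrow> 'a::euclidean_space \<Rightarrow> 'a set" where
  "support_cube N j k = cbox ((1 / 2 ^ j) *\<^sub>R k) ((1 / 2 ^ j) *\<^sub>R (k + real N *\<^sub>R One))"

lemma dilate_translate_in_cube_iff:
  "(2 ^ j :: real) *\<^sub>R x - k \<in> cbox 0 (real N *\<^sub>R One) \<longleftrightarrow> x \<in> support_cube N j k"
  unfolding support_cube_def mem_box by (auto simp: inner_simps field_simps)

lemma abs_integral_indicator_dilate_translate_le:
  fixes g :: "'a::euclidean_space \<Rightarrow> real"
  assumes g: "integrable lborel g" and \<Omega>: "\<Omega> \<in> sets borel" and c: "c \<noteq> 0"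
  shows "\<bar>LINT x|lborel. indicator \<Omega> x * g (c *\<^sub>R x - k)\<bar>
           \<le> (LINT x|lborel. \<bar>g x\<bar>) / \<bar>c\<bar> ^ DIM('a)"
proof -
  have [measurable]: "g \<in> borel_measurable lborel"
    using g by (rule borel_measurable_integrable)
  have g_dilated: "integrable lborel (\<lambda>x. g (c *\<^sub>R x - k))"
    using g c by (simp add: lborel_integrable_dilate_translate_iff)
  then have "integrable lborel (\<lambda>x. indicator \<Omega> x * g (c *\<^sub>R x - k))"
    using integrable_mult_indicator[OF _ g_dilated, of \<Omega>] \<Omega> by simp
  then have "\<bar>LINT x|lborel. indicator \<Omega> x * g (c *\<^sub>R x - k)\<bar> \<le> (LINT x|lborel. \<bar>g (c *\<^sub>R x - k)\<bar>)"
    using g_dilated by (intro order_trans[OF integral_abs_bound] integral_mono)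
      (auto simp: indicator_def)
  also have "\<dots> = (LINT x|lborel. \<bar>g x\<bar>) / \<bar>c\<bar> ^ DIM('a)"
    using c by (intro lborel_integral_dilate_translate) simp_all
  finally show ?thesis .
qed

lemma integral_indicator_dilate_translate_eq_0:
  fixes g :: "'a::euclidean_space \<Rightarrow> real"
  assumes g: "integrable lborel g" and mean_0: "(LINT x|lborel. g x) = 0"
    and supp: "\<And>y. g y \<noteq> 0 \<Longrightarrow> y \<in> cbox 0 (real N *\<^sub>R One)"
    and \<Omega>: "\<Omega> \<in> sets borel" and disjoint: "support_cube N j k \<inter> lebesgue_boundary \<Omega> = {}"
  shows "(LINT x|lborel. indicator \<Omega> x * g ((2 ^ j) *\<^sub>R x - k)) = 0"
proof -
  have [measurable]: "g \<in> borel_measurable lborel" "\<Omega> \<in> sets lborel"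
    using g \<Omega> by (simp_all add: borel_measurable_integrable)
  have outside: "g ((2 ^ j) *\<^sub>R x - k) = 0" if "x \<notin> support_cube N j k" for x
    using supp that dilate_translate_in_cube_iff by blast
  have "compact (support_cube N j k)" "connected (support_cube N j k)"
    unfolding support_cube_def by (simp_all add: convex_connected)
  from null_or_conull_if_disjoint_lebesgue_boundary[OF \<Omega> this disjoint] show ?thesis
  proof
    assume "support_cube N j k \<inter> \<Omega> \<in> null_sets lborel"
    then have "AE x in lborel. indicator \<Omega> x * g ((2 ^ j) *\<^sub>R x - k) = 0"
      by (rule AE_not_in[THEN AE_mp]) (auto simp: outside indicator_def)
    then show ?thesis
      by (rule integral_eq_zero_AE)
  next
    assume "support_cube N j k - \<Omega> \<in> null_sets lborel"
    then have "AE x in lborel. indicator \<Omega> x * g ((2 ^ j) *\<^sub>R x - k) = g ((2 ^ j) *\<^sub>R x - k)"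
      by (rule AE_not_in[THEN AE_mp]) (auto simp: outside indicator_def)
    then have "(LINT x|lborel. indicator \<Omega> x * g ((2 ^ j) *\<^sub>R x - k))
                 = (LINT x|lborel. g ((2 ^ j) *\<^sub>R x - k))"
      by (intro integral_cong_AE) simp_all
    also have "\<dots> = 0"
      using mean_0 by (simp add: lborel_integral_dilate_translate)
    finally show ?thesis .
  qed
qed

lemma wavelet_system_phiD:
  assumes "wavelet_system r N \<phi> \<psi>"
  shows "integrable lborel \<phi>" and "\<phi> y \<noteq> 0 \<Longrightarrow> y \<in> cbox 0 (real N *\<^sub>R One)"
  using assms closure_subset[of "{x. \<phi> x \<noteq> 0}"] unfolding wavelet_system_def by blast+

lemma wavelet_system_psiD:
  fixes \<psi> :: "nat \<Rightarrow> 'a::euclidean_space \<Rightarrow> real"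
  assumes wav: "wavelet_system r N \<phi> \<psi>" and i: "i \<in> {1..2^DIM('a) - 1}"
  shows "integrable lborel (\<psi> i)" and "(LINT x|lborel. \<psi> i x) = 0"
    and "\<psi> i y \<noteq> 0 \<Longrightarrow> y \<in> cbox 0 (real N *\<^sub>R One)"
proof -
  \<comment> \<open>The moment condition of order 0 is imposed for every \<open>r\<close>, since \<open>0 \<le> r - 1\<close> in \<open>nat\<close>.\<close>
  have "\<forall>i\<in>{1..2^DIM('a) - 1}. \<forall>\<alpha>::'a \<Rightarrow> nat. (\<Sum>b\<in>Basis. \<alpha> b) \<le> r - 1 \<longrightarrow>
          integrable lborel (\<lambda>x. (\<Prod>b\<in>Basis. (x \<bullet> b) ^ \<alpha> b) * \<psi> i x) \<and>
          (LINT x|lborel. (\<Prod>b\<in>Basis. (x \<bullet> b) ^ \<alpha> b) * \<psi> i x) = 0"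
    using wav unfolding wavelet_system_def by (elim conjE) assumption
  from this[rule_format, OF i, of "\<lambda>_. 0"]
  show "integrable lborel (\<psi> i)" "(LINT x|lborel. \<psi> i x) = 0"
    by simp_all
  show "\<psi> i y \<noteq> 0 \<Longrightarrow> y \<in> cbox 0 (real N *\<^sub>R One)"
    using wav i closure_subset[of "{x. \<psi> i x \<noteq> 0}"] unfolding wavelet_system_def by blast
qed

lemma abs_coef_phi_indicator_le:
  assumes "wavelet_system r N \<phi> \<psi>" and "\<Omega> \<in> sets borel"
  shows "\<bar>coef_phi \<phi> (indicator \<Omega>) k\<bar> \<le> (LINT x|lborel. \<bar>\<phi> x\<bar>)"
  using abs_integral_indicator_dilate_translate_le[OF wavelet_system_phiD(1)[OF assms(1)] assms(2), of 1 k]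
  by (simp add: coef_phi_def)

lemma abs_coef_psi_indicator_le:
  fixes \<psi> :: "nat \<Rightarrow> 'a::euclidean_space \<Rightarrow> real"
  assumes "wavelet_system r N \<phi> \<psi>" and "i \<in> {1..2^DIM('a) - 1}" and "\<Omega> \<in> sets borel"
  shows "\<bar>coef_psi \<psi> (indicator \<Omega>) j i k\<bar> \<le> (LINT x|lborel. \<bar>\<psi> i x\<bar>)"
  using abs_integral_indicator_dilate_translate_le[OF wavelet_system_psiD(1)[OF assms(1,2)] assms(3),
      of "2 ^ j" k]
  by (simp add: coef_psi_def abs_mult power_mult mult.commute field_simps)

lemma abs_coef_psi_indicator_le_sum:
  fixes \<psi> :: "nat \<Rightarrow> 'a::euclidean_space \<Rightarrow> real"
  assumes "wavelet_system r N \<phi> \<psi>" and "i \<in> {1..2^DIM('a) - 1}" and "\<Omega> \<in> sets borel"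
  shows "\<bar>coef_psi \<psi> (indicator \<Omega>) j i k\<bar> \<le> (\<Sum>i\<in>{1..2^DIM('a) - 1}. LINT x|lborel. \<bar>\<psi> i x\<bar>)"
proof -
  have "(LINT x|lborel. \<bar>\<psi> i x\<bar>) \<le> (\<Sum>i\<in>{1..2^DIM('a) - 1}. LINT x|lborel. \<bar>\<psi> i x\<bar>)"
    using assms(2) by (intro member_le_sum integral_nonneg_AE) auto
  then show ?thesis
    using abs_coef_psi_indicator_le[OF assms, of j k] by linarith
qed

lemma coef_psi_indicator_eq_0:
  fixes \<psi> :: "nat \<Rightarrow> 'a::euclidean_space \<Rightarrow> real"
  assumes "wavelet_system r N \<phi> \<psi>" and "i \<in> {1..2^DIM('a) - 1}" and "\<Omega> \<in> sets borel"
    and "support_cube N j k \<inter> lebesgue_boundary \<Omega> = {}"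
  shows "coef_psi \<psi> (indicator \<Omega>) j i k = 0"
  using integral_indicator_dilate_translate_eq_0[OF wavelet_system_psiD[OF assms(1,2)] assms(3,4)]
  by (simp add: coef_psi_def)

lemma coef_phi_indicator_eq_0:
  assumes "wavelet_system r N \<phi> \<psi>" and "support_cube N 0 k \<inter> \<Omega> = {}"
  shows "coef_phi \<phi> (indicator \<Omega>) k = 0"
proof -
  have "(\<lambda>x. indicator \<Omega> x * \<phi> (x - k)) = (\<lambda>_. 0)"
    using assms(2) wavelet_system_phiD(2)[OF assms(1)] dilate_translate_in_cube_iff[of 0 _ k N]
    by (force simp: indicator_def)
  then show ?thesis
    by (simp add: coef_phi_def)
qed

lemma int_lattice_0: "0 \<in> int_lattice"
  by (simp add: int_lattice_def)

lemma int_lattice_diff: "k \<in> int_lattice \<Longrightarrow> m \<in> int_lattice \<Longrightarrow> k - m \<in> int_lattice"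
  by (auto simp: int_lattice_def inner_diff_left)

lemma finite_int_lattice_Int_bounded:
  fixes A :: "'a::euclidean_space set"
  assumes "bounded A"
  shows "finite (int_lattice \<inter> A)"
proof -
  obtain R where R: "\<And>x. x \<in> A \<Longrightarrow> norm x \<le> R"
    using assms bounded_iff by blast
  define floors where "floors k = restrict (\<lambda>b. \<lfloor>k \<bullet> b\<rfloor>) Basis" for k :: 'a
  have "inj_on floors (int_lattice \<inter> A)"
  proof (rule inj_onI)
    fix x y assume x: "x \<in> int_lattice \<inter> A" and y: "y \<in> int_lattice \<inter> A"
      and eq: "floors x = floors y"
    show "x = y"
    proof (rule euclidean_eqI)
      fix b :: 'a assume b: "b \<in> Basis"
      have "x \<bullet> b \<in> \<int>" "y \<bullet> b \<in> \<int>"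
        using x y b by (auto simp: int_lattice_def)
      moreover have "\<lfloor>x \<bullet> b\<rfloor> = \<lfloor>y \<bullet> b\<rfloor>"
        using fun_cong[OF eq, of b] b by (simp add: floors_def)
      ultimately show "x \<bullet> b = y \<bullet> b"
        by (metis floor_of_int Ints_cases)
    qed
  qed
  moreover have "floors ` (int_lattice \<inter> A) \<subseteq> (\<Pi>\<^sub>E b\<in>Basis. {-\<lceil>R\<rceil>..\<lceil>R\<rceil>})"
  proof (rule image_subsetI)
    fix k assume k: "k \<in> int_lattice \<inter> A"
    have "-\<lceil>R\<rceil> \<le> \<lfloor>k \<bullet> b\<rfloor> \<and> \<lfloor>k \<bullet> b\<rfloor> \<le> \<lceil>R\<rceil>" if b: "b \<in> Basis" for b
    proof -
      have "\<bar>k \<bullet> b\<bar> \<le> R"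
        using Basis_le_norm[OF b, of k] R k by force
      then show ?thesis
        unfolding le_floor_iff floor_le_iff using le_of_int_ceiling[of R] by (simp add: abs_le_iff)
          linarith
    qed
    then show "floors k \<in> (\<Pi>\<^sub>E b\<in>Basis. {-\<lceil>R\<rceil>..\<lceil>R\<rceil>})"
      by (simp add: floors_def)
  qed
  moreover have "finite (\<Pi>\<^sub>E b\<in>(Basis :: 'a set). {-\<lceil>R\<rceil>..\<lceil>R\<rceil>})"
    by (simp add: finite_PiE)
  ultimately show ?thesis
    by (rule inj_on_finite)
qed

lemma two_powr_minus_real: "(2::real) powr - real j = 1 / 2 ^ j"
  by (simp add: powr_minus_divide powr_realpow)

lemma dyadic_cube_floorE:
  fixes x :: "'a::euclidean_space"
  obtains a where "a \<in> int_lattice" "x \<in> dyadic_cube j a"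
    and "\<And>b. b \<in> Basis \<Longrightarrow> a \<bullet> b = of_int \<lfloor>2 ^ j * (x \<bullet> b)\<rfloor>"
proof
  define a where "a = (\<Sum>b\<in>Basis. of_int \<lfloor>2 ^ j * (x \<bullet> b)\<rfloor> *\<^sub>R b)"
  show a_inner: "a \<bullet> b = of_int \<lfloor>2 ^ j * (x \<bullet> b)\<rfloor>" if "b \<in> Basis" for b
    unfolding a_def using that by (simp add: inner_sum_left inner_Basis if_distrib cong: if_cong)
  then show "a \<in> int_lattice"
    by (simp add: int_lattice_def)
  show "x \<in> dyadic_cube j a"
    unfolding dyadic_cube_def mem_box two_powr_minus_real
  proof safe
    fix b :: 'a assume b: "b \<in> Basis"
    have "of_int \<lfloor>2 ^ j * (x \<bullet> b)\<rfloor> \<le> 2 ^ j * (x \<bullet> b)"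
      "2 ^ j * (x \<bullet> b) \<le> of_int \<lfloor>2 ^ j * (x \<bullet> b)\<rfloor> + 1"
      by linarith+
    then show "(1 / 2 ^ j) *\<^sub>R a \<bullet> b \<le> x \<bullet> b" "x \<bullet> b \<le> (1 / 2 ^ j) *\<^sub>R (a + One) \<bullet> b"
      using a_inner[OF b] b by (auto simp: inner_simps field_simps)
  qed
qed

lemma support_cubes_meeting_subset:
  fixes A :: "'a::euclidean_space set"
  shows "{k \<in> int_lattice. support_cube N j k \<inter> A \<noteq> {}}
           \<subseteq> (\<lambda>(a, m). a - m) ` ({a \<in> int_lattice. A \<inter> dyadic_cube j a \<noteq> {}}
                                  \<times> (int_lattice \<inter> cbox 0 (real N *\<^sub>R One)))"
proof
  fix k assume "k \<in> {k \<in> int_lattice. support_cube N j k \<inter> A \<noteq> {}}"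
  then obtain x where k: "k \<in> int_lattice" and x: "x \<in> support_cube N j k" "x \<in> A"
    by blast
  obtain a where a: "a \<in> int_lattice" "x \<in> dyadic_cube j a"
    and a_inner: "\<And>b. b \<in> Basis \<Longrightarrow> a \<bullet> b = of_int \<lfloor>2 ^ j * (x \<bullet> b)\<rfloor>"
    using dyadic_cube_floorE[of x j] by blast
  have "0 \<le> (a - k) \<bullet> b \<and> (a - k) \<bullet> b \<le> real N" if b: "b \<in> Basis" for b
  proof -
    obtain z where z: "k \<bullet> b = of_int z"
      using k b by (auto simp: int_lattice_def elim: Ints_cases)
    have "k \<bullet> b \<le> 2 ^ j * (x \<bullet> b)" "2 ^ j * (x \<bullet> b) \<le> k \<bullet> b + real N"
      using x(1) b unfolding support_cube_def mem_box by (auto simp: inner_simps field_simps)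
    then have "z \<le> \<lfloor>2 ^ j * (x \<bullet> b)\<rfloor>" "\<lfloor>2 ^ j * (x \<bullet> b)\<rfloor> \<le> z + int N"
      unfolding z by (simp_all add: le_floor_iff floor_le_iff)
    then show ?thesis
      using a_inner[OF b] z by (simp add: inner_diff_left)
  qed
  then have "a - k \<in> int_lattice \<inter> cbox 0 (real N *\<^sub>R One)"
    using int_lattice_diff[OF a(1) k] by (simp add: mem_box)
  moreover have "a \<in> {a \<in> int_lattice. A \<inter> dyadic_cube j a \<noteq> {}}"
    using a x(2) by blast
  ultimately show "k \<in> (\<lambda>(a, m). a - m) ` ({a \<in> int_lattice. A \<inter> dyadic_cube j a \<noteq> {}}
                                           \<times> (int_lattice \<inter> cbox 0 (real N *\<^sub>R One)))"
    by (intro image_eqI[where x = "(a, a - k)"]) auto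
qed

lemma finite_dyadic_cubes_meeting:
  fixes A :: "'a::euclidean_space set"
  assumes "bounded A"
  shows "finite {a \<in> int_lattice. A \<inter> dyadic_cube j a \<noteq> {}}"
proof -
  let ?B = "(\<lambda>(u, v). u - v) ` ((\<lambda>x. (2 ^ j :: real) *\<^sub>R x) ` A \<times> cbox 0 One)"
  have "a \<in> ?B" if "x \<in> A" "x \<in> dyadic_cube j a" for a x
  proof -
    have "(2 ^ j :: real) *\<^sub>R x - a \<in> cbox 0 One"
      using that(2) unfolding dyadic_cube_def mem_box two_powr_minus_real
      by (auto simp: inner_simps field_simps)
    then show ?thesis
      using that(1)
      by (auto intro!: image_eqI[where x = "((2 ^ j :: real) *\<^sub>R x, (2 ^ j :: real) *\<^sub>R x - a)"])
  qed
  then have "{a \<in> int_lattice. A \<inter> dyadic_cube j a \<noteq> {}} \<subseteq> int_lattice \<inter> ?B"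
    by blast
  moreover have "bounded ?B"
    using assms by (intro bounded_minus bounded_scaling) auto
  ultimately show ?thesis
    using finite_int_lattice_Int_bounded finite_subset by blast
qed

lemma
  fixes A :: "'a::euclidean_space set"
  assumes "bounded A"
  shows finite_support_cubes_meeting: "finite {k \<in> int_lattice. support_cube N j k \<inter> A \<noteq> {}}"
    and card_support_cubes_meeting_le: "card {k \<in> int_lattice. support_cube N j k \<inter> A \<noteq> {}}
           \<le> Ncount j A * card (int_lattice \<inter> cbox 0 (real N *\<^sub>R One :: 'a))"
proof -
  let ?D = "{a \<in> int_lattice. A \<inter> dyadic_cube j a \<noteq> {}}"
    and ?M = "int_lattice \<inter> cbox 0 (real N *\<^sub>R One :: 'a)"
  have fin: "finite (?D \<times> ?M)"
    using finite_dyadic_cubes_meeting[OF assms] finite_int_lattice_Int_bounded[OF bounded_cbox]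
    by blast
  show "finite {k \<in> int_lattice. support_cube N j k \<inter> A \<noteq> {}}"
    by (rule finite_subset[OF support_cubes_meeting_subset finite_imageI[OF fin]])
  have "card {k \<in> int_lattice. support_cube N j k \<inter> A \<noteq> {}} \<le> card ((\<lambda>(a, m). a - m) ` (?D \<times> ?M))"
    using finite_imageI[OF fin] support_cubes_meeting_subset by (rule card_mono)
  also have "\<dots> \<le> card (?D \<times> ?M)"
    by (rule card_image_le[OF fin])
  finally show "card {k \<in> int_lattice. support_cube N j k \<inter> A \<noteq> {}} \<le> Ncount j A * card ?M"
    by (simp add: Ncount_def card_cartesian_product)
qed

lemma summable_on_finite_nonzero:
  fixes f :: "'a \<Rightarrow> 'b::{comm_monoid_add, topological_space}"
  assumes "finite {x \<in> A. f x \<noteq> 0}"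
  shows "f summable_on A"
proof -
  have "f summable_on {x \<in> A. f x \<noteq> 0}"
    using assms by simp
  then show ?thesis
    by (subst summable_on_cong_neutral[where T = "{x \<in> A. f x \<noteq> 0}" and g = f]) auto
qed

definition besov_level_sum ::
  "(nat \<Rightarrow> 'a::euclidean_space \<Rightarrow> real) \<Rightarrow> real \<Rightarrow> real \<Rightarrow> ('a \<Rightarrow> real) \<Rightarrow> nat \<Rightarrow> real" where
  "besov_level_sum \<psi> s p T j =
     (\<Sum>\<^sub>\<infinity>(i, k)\<in>{1..2^DIM('a) - 1} \<times> int_lattice.
        \<bar>2 powr ((s - real DIM('a) / p) * real j) * coef_psi \<psi> T j i k\<bar> powr p)"

lemma besov_0_infinity_infinityI:
  fixes \<psi> :: "nat \<Rightarrow> 'a::euclidean_space \<Rightarrow> real"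
  assumes phi_bound: "\<And>k. k \<in> int_lattice \<Longrightarrow> \<bar>coef_phi \<phi> T k\<bar> \<le> C"
    and psi_bound: "\<And>j i k. i \<in> {1..2^DIM('a) - 1} \<Longrightarrow> k \<in> int_lattice \<Longrightarrow>
                      \<bar>coef_psi \<psi> T j i k\<bar> \<le> C"
  shows "besov \<phi> \<psi> 0 \<infinity> \<infinity> T"
proof -
  let ?I = "{1..2^DIM('a) - 1} \<times> (int_lattice :: 'a set)"
  have "(1::nat, 0) \<in> ?I"
    using int_lattice_0 one_less_power[of "2::nat" "DIM('a)"] by auto
  then have "(SUP (i, k)\<in>?I. \<bar>coef_psi \<psi> T j i k\<bar>) \<le> C" for j
    using psi_bound by (intro cSUP_least) auto
  then show ?thesis
    using phi_bound psi_bound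
    unfolding besov_def Let_def by (auto intro!: bdd_aboveI2 simp del: atLeastAtMost_iff)
qed

lemma besov_ennreal_iff:
  fixes \<psi> :: "nat \<Rightarrow> 'a::euclidean_space \<Rightarrow> real"
  assumes p: "p > 0"
    and phi_finite: "finite {k \<in> int_lattice. coef_phi \<phi> T k \<noteq> 0}"
    and psi_finite: "\<And>j. finite {(i, k) \<in> {1..2^DIM('a) - 1} \<times> int_lattice. coef_psi \<psi> T j i k \<noteq> 0}"
  shows "besov \<phi> \<psi> s (ennreal p) Q T \<longleftrightarrow>
           (if Q = \<infinity> then bdd_above (range (besov_level_sum \<psi> s p T))
            else summable (\<lambda>j. besov_level_sum \<psi> s p T j powr (enn2real Q / p)))"
proof -
  have "(\<lambda>k. \<bar>coef_phi \<phi> T k\<bar> powr p) summable_on int_lattice"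
    using phi_finite by (intro summable_on_finite_nonzero) (simp add: p)
  moreover have "(\<lambda>(i, k). \<bar>2 powr ((s - real DIM('a) / p) * real j) * coef_psi \<psi> T j i k\<bar> powr p)
                   summable_on {1..2^DIM('a) - 1} \<times> int_lattice" for j
    by (rule summable_on_finite_nonzero, rule finite_subset[OF _ psi_finite[of j]]) (auto simp: p)
  ultimately show ?thesis
    using p unfolding besov_def Let_def besov_level_sum_def by simp
qed

lemma besov_level_sum_le:
  fixes \<psi> :: "nat \<Rightarrow> 'a::euclidean_space \<Rightarrow> real"
  assumes p: "p > 0" and C: "0 \<le> C"
    and psi_bound: "\<And>i k. i \<in> {1..2^DIM('a) - 1} \<Longrightarrow> k \<in> int_lattice \<Longrightarrow>
                      \<bar>coef_psi \<psi> T j i k\<bar> \<le> C"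
    and K: "finite K" "K \<subseteq> int_lattice"
    and psi_support: "\<And>i k. i \<in> {1..2^DIM('a) - 1} \<Longrightarrow> k \<in> int_lattice \<Longrightarrow>
                        coef_psi \<psi> T j i k \<noteq> 0 \<Longrightarrow> k \<in> K"
  shows "besov_level_sum \<psi> s p T j
           \<le> real (2^DIM('a) - 1) * real (card K) * C powr p * 2 powr ((s * p - real DIM('a)) * real j)"
proof -
  let ?I = "{1..2^DIM('a) - 1::nat}"
  define t where "t = (\<lambda>(i, k). \<bar>2 powr ((s - real DIM('a) / p) * real j) * coef_psi \<psi> T j i k\<bar> powr p)"
  have t_le: "t (i, k) \<le> C powr p * 2 powr ((s * p - real DIM('a)) * real j)"
    if "i \<in> ?I" "k \<in> int_lattice" for i k
  proof -
    define e where "e = (s - real DIM('a) / p) * real j"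
    have "t (i, k) = (2 powr e * \<bar>coef_psi \<psi> T j i k\<bar>) powr p"
      by (simp add: t_def e_def abs_mult)
    also have "\<dots> \<le> (2 powr e * C) powr p"
      using psi_bound[OF that] p by (intro powr_mono2 mult_left_mono) auto
    also have "\<dots> = C powr p * 2 powr (e * p)"
      using C by (simp add: powr_mult powr_powr)
    also have "e * p = (s * p - real DIM('a)) * real j"
      using p by (simp add: e_def field_simps)
    finally show ?thesis .
  qed
  have "besov_level_sum \<psi> s p T j = infsum t (?I \<times> K)"
    unfolding besov_level_sum_def t_def using K psi_support
    by (intro infsum_cong_neutral) (auto simp: p)
  also have "\<dots> = sum t (?I \<times> K)"
    using K by simp
  also have "\<dots> \<le> real (card (?I \<times> K)) * (C powr p * 2 powr ((s * p - real DIM('a)) * real j))"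
    using K t_le by (intro sum_bounded_above) auto
  finally show ?thesis
    by (simp add: card_cartesian_product mult.assoc)
qed

lemma
  fixes \<psi> :: "nat \<Rightarrow> 'a::euclidean_space \<Rightarrow> real"
  assumes p: "p > 0"
    and phi_finite: "finite {k \<in> int_lattice. coef_phi \<phi> T k \<noteq> 0}"
    and psi_finite: "\<And>j. finite {(i, k) \<in> {1..2^DIM('a) - 1} \<times> int_lattice. coef_psi \<psi> T j i k \<noteq> 0}"
    and level_le: "\<And>j. besov_level_sum \<psi> s p T j \<le> K * a j"
    and K: "0 \<le> K" and a: "\<And>j. 0 \<le> a j"
  shows besov_p_infinity_if_level_sum_le: "bdd_above (range a) \<Longrightarrow> besov \<phi> \<psi> s (ennreal p) \<infinity> T"
    and besov_p_q_if_level_sum_le: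
      "q > 0 \<Longrightarrow> summable (\<lambda>j. a j powr (q / p)) \<Longrightarrow> besov \<phi> \<psi> s (ennreal p) (ennreal q) T"
proof -
  note iff = besov_ennreal_iff[OF p phi_finite psi_finite]
  have level_nonneg: "0 \<le> besov_level_sum \<psi> s p T j" for j
    unfolding besov_level_sum_def by (intro infsum_nonneg) auto
  show "besov \<phi> \<psi> s (ennreal p) \<infinity> T" if bdd: "bdd_above (range a)"
  proof -
    obtain B where "\<And>j. a j \<le> B"
      using bdd unfolding bdd_above_def by auto
    then have "besov_level_sum \<psi> s p T j \<le> K * B" for j
      using level_le[of j] mult_left_mono[OF _ K] by (meson order_trans)
    then have "bdd_above (range (besov_level_sum \<psi> s p T))"
      by (rule bdd_aboveI2)
    then show ?thesis
      using iff by simp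
  qed
  show "besov \<phi> \<psi> s (ennreal p) (ennreal q) T"
    if q: "q > 0" and sum_a: "summable (\<lambda>j. a j powr (q / p))"
  proof -
    have "summable (\<lambda>j. besov_level_sum \<psi> s p T j powr (q / p))"
    proof (rule summable_comparison_test')
      show "summable (\<lambda>j. K powr (q / p) * a j powr (q / p))"
        using sum_a by (rule summable_mult)
      fix j
      have "besov_level_sum \<psi> s p T j powr (q / p) \<le> (K * a j) powr (q / p)"
        using level_le level_nonneg p q by (intro powr_mono2) auto
      also have "\<dots> = K powr (q / p) * a j powr (q / p)"
        using K a by (simp add: powr_mult)
      finally show "norm (besov_level_sum \<psi> s p T j powr (q / p)) \<le> K powr (q / p) * a j powr (q / p)"
        by simp
    qed
    then show ?thesis
      using iff q by simp
  qed
qed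

lemma finite_coef_phi_indicator_nonzero:
  assumes wav: "wavelet_system r N \<phi> \<psi>" and bdd: "bounded \<Omega>"
  shows "finite {k \<in> int_lattice. coef_phi \<phi> (indicator \<Omega>) k \<noteq> 0}"
proof (rule finite_subset[OF _ finite_support_cubes_meeting[OF bdd, of N 0]])
  show "{k \<in> int_lattice. coef_phi \<phi> (indicator \<Omega>) k \<noteq> 0}
          \<subseteq> {k \<in> int_lattice. support_cube N 0 k \<inter> \<Omega> \<noteq> {}}"
    using coef_phi_indicator_eq_0[OF wav] by blast
qed

lemma finite_coef_psi_indicator_nonzero:
  fixes \<Omega> :: "'a::euclidean_space set"
  assumes wav: "wavelet_system r N \<phi> \<psi>" and borel: "\<Omega> \<in> sets borel" and bdd: "bounded \<Omega>"
  shows "finite {(i, k) \<in> {1..2^DIM('a) - 1} \<times> int_lattice. coef_psi \<psi> (indicator \<Omega>) j i k \<noteq> 0}"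
proof (rule finite_subset)
  show "{(i, k) \<in> {1..2^DIM('a) - 1} \<times> int_lattice. coef_psi \<psi> (indicator \<Omega>) j i k \<noteq> 0}
          \<subseteq> {1..2^DIM('a) - 1} \<times> {k \<in> int_lattice. support_cube N j k \<inter> lebesgue_boundary \<Omega> \<noteq> {}}"
    using coef_psi_indicator_eq_0[OF wav _ borel] by blast
  show "finite ({1..2^DIM('a) - 1::nat} \<times> {k \<in> int_lattice. support_cube N j k \<inter> lebesgue_boundary \<Omega> \<noteq> {}})"
    using finite_support_cubes_meeting[OF bounded_lebesgue_boundary[OF bdd]] by simp
qed

lemma besov_0_infinity_infinity_indicator:
  assumes wav: "wavelet_system r N \<phi> \<psi>" and borel: "\<Omega> \<in> sets borel"
  shows "besov \<phi> \<psi> 0 \<infinity> \<infinity> (indicator \<Omega>)"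
proof (rule besov_0_infinity_infinityI[where
      C = "(LINT x|lborel. \<bar>\<phi> x\<bar>) + (\<Sum>i\<in>{1..2^DIM('a) - 1}. LINT x|lborel. \<bar>\<psi> i x\<bar>)"])
  have nonneg: "0 \<le> (LINT x|lborel. \<bar>\<phi> x\<bar>)" "0 \<le> (\<Sum>i\<in>{1..2^DIM('a) - 1}. LINT x|lborel. \<bar>\<psi> i x\<bar>)"
    by (auto intro!: sum_nonneg integral_nonneg_AE)
  show "\<bar>coef_phi \<phi> (indicator \<Omega>) k\<bar>
          \<le> (LINT x|lborel. \<bar>\<phi> x\<bar>) + (\<Sum>i\<in>{1..2^DIM('a) - 1}. LINT x|lborel. \<bar>\<psi> i x\<bar>)" for k
    using abs_coef_phi_indicator_le[OF wav borel, of k] nonneg by linarith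
  show "\<bar>coef_psi \<psi> (indicator \<Omega>) j i k\<bar>
          \<le> (LINT x|lborel. \<bar>\<phi> x\<bar>) + (\<Sum>i\<in>{1..2^DIM('a) - 1}. LINT x|lborel. \<bar>\<psi> i x\<bar>)"
    if "i \<in> {1..2^DIM('a) - 1}" for j i k
    using abs_coef_psi_indicator_le_sum[OF wav that borel, of j k] nonneg by linarith
qed

lemma besov_level_sum_indicator_le:
  fixes \<Omega> :: "'a::euclidean_space set"
  assumes wav: "wavelet_system r N \<phi> \<psi>" and borel: "\<Omega> \<in> sets borel" and bdd: "bounded \<Omega>"
    and p: "p > 0"
  obtains K where "0 \<le> K"
    and "\<And>j. besov_level_sum \<psi> s p (indicator \<Omega>) j
               \<le> K * (2 powr ((s * p - real DIM('a)) * real j) * real (Ncount j (lebesgue_boundary \<Omega>)))"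
proof -
  define C where "C = (\<Sum>i\<in>{1..2^DIM('a) - 1}. LINT x|lborel. \<bar>\<psi> i x\<bar>)"
  define M where "M = card (int_lattice \<inter> cbox 0 (real N *\<^sub>R One :: 'a))"
  define K where "K = real (2^DIM('a) - 1) * real M * C powr p"
  have C_bound: "\<bar>coef_psi \<psi> (indicator \<Omega>) j i k\<bar> \<le> C" if "i \<in> {1..2^DIM('a) - 1}" for j i k
    unfolding C_def using wav that borel by (rule abs_coef_psi_indicator_le_sum)
  have C_nonneg: "0 \<le> C"
    unfolding C_def by (intro sum_nonneg integral_nonneg_AE) auto
  have "besov_level_sum \<psi> s p (indicator \<Omega>) j
          \<le> K * (2 powr ((s * p - real DIM('a)) * real j) * real (Ncount j (lebesgue_boundary \<Omega>)))" for j
  proof -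
    let ?K = "{k \<in> int_lattice. support_cube N j k \<inter> lebesgue_boundary \<Omega> \<noteq> {}}"
    have "besov_level_sum \<psi> s p (indicator \<Omega>) j
            \<le> real (2^DIM('a) - 1) * real (card ?K) * C powr p * 2 powr ((s * p - real DIM('a)) * real j)"
      using coef_psi_indicator_eq_0[OF wav _ borel]
      by (intro besov_level_sum_le[OF p C_nonneg C_bound]
            finite_support_cubes_meeting[OF bounded_lebesgue_boundary[OF bdd]]) auto
    also have "\<dots> \<le> real (2^DIM('a) - 1) * real (Ncount j (lebesgue_boundary \<Omega>) * M) * C powr p
                      * 2 powr ((s * p - real DIM('a)) * real j)"
      using card_support_cubes_meeting_le[OF bounded_lebesgue_boundary[OF bdd], of N j]
      unfolding M_def by (intro mult_right_mono mult_left_mono) (auto simp flip: of_nat_mult)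
    finally show ?thesis
      by (simp add: K_def algebra_simps)
  qed
  moreover have "0 \<le> K"
    unfolding K_def using C_nonneg by simp
  ultimately show thesis
    using that by blast
qed

theorem mainTheorem8:
  fixes \<Omega> :: "'a::euclidean_space set"
    and \<phi> :: "'a \<Rightarrow> real" and \<psi> :: "nat \<Rightarrow> 'a \<Rightarrow> real"
    and r N :: nat
  assumes wav: "wavelet_system r N \<phi> \<psi>" and r: "r \<ge> 1"
    and borel: "\<Omega> \<in> sets borel" and bdd: "bounded \<Omega>"
  shows "besov \<phi> \<psi> 0 \<infinity> \<infinity> (indicator \<Omega>) \<and>
    (\<forall>s p. p > 0 \<longrightarrow>
          bdd_above (range (\<lambda>j. 2 powr ((s * p - real DIM('a)) * real j)
                                  * real (Ncount j (lebesgue_boundary \<Omega>)))) \<longrightarrow>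
          besov \<phi> \<psi> s (ennreal p) \<infinity> (indicator \<Omega>)) \<and>
    (\<forall>s p q. p > 0 \<longrightarrow> q > 0 \<longrightarrow>
          summable (\<lambda>j. (2 powr ((s * p - real DIM('a)) * real j)
                          * real (Ncount j (lebesgue_boundary \<Omega>))) powr (q / p)) \<longrightarrow>
          besov \<phi> \<psi> s (ennreal p) (ennreal q) (indicator \<Omega>))"
proof (intro conjI allI impI)
  note phi_finite = finite_coef_phi_indicator_nonzero[OF wav bdd]
    and psi_finite = finite_coef_psi_indicator_nonzero[OF wav borel bdd]
  show "besov \<phi> \<psi> 0 \<infinity> \<infinity> (indicator \<Omega>)"
    using wav borel by (rule besov_0_infinity_infinity_indicator)
  fix s p :: real assume p: "p > 0"
  obtain K where K: "0 \<le> K"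
    "\<And>j. besov_level_sum \<psi> s p (indicator \<Omega>) j
           \<le> K * (2 powr ((s * p - real DIM('a)) * real j) * real (Ncount j (lebesgue_boundary \<Omega>)))"
    using besov_level_sum_indicator_le[OF wav borel bdd p] by blast
  show "besov \<phi> \<psi> s (ennreal p) \<infinity> (indicator \<Omega>)"
    if "bdd_above (range (\<lambda>j. 2 powr ((s * p - real DIM('a)) * real j)
                                 * real (Ncount j (lebesgue_boundary \<Omega>))))"
    using besov_p_infinity_if_level_sum_le[OF p phi_finite psi_finite K(2) K(1)] that by simp
  show "besov \<phi> \<psi> s (ennreal p) (ennreal q) (indicator \<Omega>)"
    if "q > 0" and "summable (\<lambda>j. (2 powr ((s * p - real DIM('a)) * real j)
                                   * real (Ncount j (lebesgue_boundary \<Omega>))) powr (q / p))" for q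
    using besov_p_q_if_level_sum_le[OF p phi_finite psi_finite K(2) K(1)] that by simp
qed

end
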